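(* Let $n\ge 1$ and let $f:\{0,1\}^n\to\{0,1\}^n$. The map $G_f:\mathcal{X}\to\mathcal{X}$ is topologically transitive (with respect to the metric $d$) if and only if the asynchronous iteration graph $\Gamma(f)$ is strongly connected.
   Context: Write $\mathbb{B}=\{0,1\}$ and $\llbracket 1;n\rrbracket=\{1,\dots,n\}$. For $f=(f_1,\dots,f_n):\mathbb{B}^n\to\mathbb{B}^n$, define $F_f:\llbracket 1;n\rrbracket\times\mathbb{B}^n\to\mathbb{B}^n$ by $F_f(i,x)=(x_1,\dots,x_{i-1},f_i(x),x_{i+1},\dots,x_n)$. Let $\mathcal{X}=\llbracket 1;n\rrbracket^{\mathbb{N}}\times\mathbb{B}^n$ and define $G_f:\mathcal{X}\to\mathcal{X}$ by $G_f(s,x)=(\sigma(s),F_f(s_0,x))$, where $\sigma(s)_t=s_{t+1}$ for all $t\in\mathbb{N}$. The metric on $\mathcal{X}$ is $d((s,x),(s',x'))=\sum_{i=1}^n|x_i-x'_i|+\frac{9}{n}\sum_{t\in\mathbb{N}}\frac{|s_t-s'_t|}{10^{t+1}}$. $G_f$ is topologically transitive if for all $X,Y\in\mathcal{X}$ and all open balls $B_X,B_Y$ centered at $X$ and $Y$, there exist $X'\in B_X$ and $t\in\mathbb{N}$ with $G_f^t(X')\in B_Y$. The asynchronous iteration graph $\Gamma(f)$ is the directed graph with vertex set $\mathbb{B}^n$ containing, for every $x\in\mathbb{B}^n$ and every $i\in\llbracket 1;n\rrbracket$, an arc from $x$ to $F_f(i,x)$. *)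

theory Defs
  imports Complex_Main
begin

text \<open>Components are indexed by 1..n. A point of B^n is a function nat => bool
  that is False outside {1..n} (so that B^n is represented faithfully as a set).\<close>

definition Bn :: "nat \<Rightarrow> (nat \<Rightarrow> bool) set" where
  "Bn n = {x. \<forall>i. i \<notin> {1..n} \<longrightarrow> \<not> x i}"

definition Strat :: "nat \<Rightarrow> (nat \<Rightarrow> nat) set" where
  "Strat n = {s. \<forall>t. s t \<in> {1..n}}"

definition XX :: "nat \<Rightarrow> ((nat \<Rightarrow> nat) \<times> (nat \<Rightarrow> bool)) set" where
  "XX n = Strat n \<times> Bn n"

definition Ff :: "((nat \<Rightarrow> bool) \<Rightarrow> (nat \<Rightarrow> bool)) \<Rightarrow> nat \<Rightarrow> (nat \<Rightarrow> bool) \<Rightarrow> (nat \<Rightarrow> bool)" where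
  "Ff f i x = x(i := f x i)"

definition Gf :: "((nat \<Rightarrow> bool) \<Rightarrow> (nat \<Rightarrow> bool)) \<Rightarrow> (nat \<Rightarrow> nat) \<times> (nat \<Rightarrow> bool) \<Rightarrow> (nat \<Rightarrow> nat) \<times> (nat \<Rightarrow> bool)" where
  "Gf f = (\<lambda>(s, x). (\<lambda>t. s (Suc t), Ff f (s 0) x))"

definition dist_X :: "nat \<Rightarrow> (nat \<Rightarrow> nat) \<times> (nat \<Rightarrow> bool) \<Rightarrow> (nat \<Rightarrow> nat) \<times> (nat \<Rightarrow> bool) \<Rightarrow> real" where
  "dist_X n = (\<lambda>(s, x) (s', x').
      (\<Sum>i = 1..n. if x i = x' i then 0 else 1)
      + 9 / real n * (\<Sum>t. \<bar>real (s t) - real (s' t)\<bar> / 10 ^ (t + 1)))"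

definition ball_X :: "nat \<Rightarrow> (nat \<Rightarrow> nat) \<times> (nat \<Rightarrow> bool) \<Rightarrow> real \<Rightarrow> ((nat \<Rightarrow> nat) \<times> (nat \<Rightarrow> bool)) set" where
  "ball_X n c r = {y \<in> XX n. dist_X n c y < r}"

definition topologically_transitive ::
  "nat \<Rightarrow> ((nat \<Rightarrow> bool) \<Rightarrow> (nat \<Rightarrow> bool)) \<Rightarrow> bool" where
  "topologically_transitive n f \<longleftrightarrow>
     (\<forall>X \<in> XX n. \<forall>Y \<in> XX n. \<forall>rX > 0. \<forall>rY > 0.
        \<exists>X' \<in> ball_X n X rX. \<exists>t::nat. (Gf f ^^ t) X' \<in> ball_X n Y rY)"

definition Gamma_arcs :: "nat \<Rightarrow> ((nat \<Rightarrow> bool) \<Rightarrow> (nat \<Rightarrow> bool)) \<Rightarrow> ((nat \<Rightarrow> bool) \<times> (nat \<Rightarrow> bool)) set" where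
  "Gamma_arcs n f = {(x, Ff f i x) | x i. x \<in> Bn n \<and> i \<in> {1..n}}"

definition strongly_connected_Gamma :: "nat \<Rightarrow> ((nat \<Rightarrow> bool) \<Rightarrow> (nat \<Rightarrow> bool)) \<Rightarrow> bool" where
  "strongly_connected_Gamma n f \<longleftrightarrow> (\<forall>x \<in> Bn n. \<forall>y \<in> Bn n. (x, y) \<in> (Gamma_arcs n f)\<^sup>*)"

end

theory Submission
  imports Defs
begin

text \<open>A point of \<open>\<X>\<close> lies within distance \<open>< 1\<close> of another only if both have the same
  configuration, while strategies agreeing on the first \<open>k\<close> steps put two points within
  \<open>10\<^sup>-\<^sup>k\<close>. So transitivity of \<open>G\<^sub>f\<close> says exactly that any configuration reaches any other
  one by some strategy, i.e. that \<open>\<Gamma>(f)\<close> is strongly connected: conversely, to go from a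
  ball around \<open>(s, x)\<close> to \<open>(s', y)\<close> follow \<open>s\<close> long enough to stay in the ball, then a path
  of \<open>\<Gamma>(f)\<close> to \<open>y\<close>, then \<open>s'\<close>.\<close>

fun Ff_iter :: "((nat \<Rightarrow> bool) \<Rightarrow> (nat \<Rightarrow> bool)) \<Rightarrow> (nat \<Rightarrow> nat) \<Rightarrow> nat \<Rightarrow> (nat \<Rightarrow> bool) \<Rightarrow> nat \<Rightarrow> bool" where
  "Ff_iter f s 0 x = x"
| "Ff_iter f s (Suc t) x = Ff_iter f (\<lambda>u. s (Suc u)) t (Ff f (s 0) x)"

lemma Gf_funpow: "(Gf f ^^ t) (s, x) = (\<lambda>u. s (u + t), Ff_iter f s t x)"
proof (induction t arbitrary: s x)
  case 0
  then show ?case by simp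
next
  case (Suc t)
  have "(Gf f ^^ Suc t) (s, x) = (Gf f ^^ t) (\<lambda>u. s (Suc u), Ff f (s 0) x)"
    by (simp only: funpow_Suc_right comp_apply) (simp add: Gf_def)
  then show ?case using Suc.IH by simp
qed

lemma Ff_iter_add: "Ff_iter f s (k + m) x = Ff_iter f (\<lambda>u. s (u + k)) m (Ff_iter f s k x)"
  by (induction k arbitrary: s x) auto

lemma Ff_iter_cong: "\<forall>u<k. s u = s' u \<Longrightarrow> Ff_iter f s k x = Ff_iter f s' k x"
  by (induction k arbitrary: s s' x) simp_all

lemma Strat_shift: "s \<in> Strat n \<Longrightarrow> (\<lambda>u. s (u + k)) \<in> Strat n"
  by (simp add: Strat_def)

lemma Ff_in_Bn: "x \<in> Bn n \<Longrightarrow> i \<in> {1..n} \<Longrightarrow> Ff f i x \<in> Bn n"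
  by (auto simp: Bn_def Ff_def)

lemma Ff_in_Gamma_arcs: "x \<in> Bn n \<Longrightarrow> i \<in> {1..n} \<Longrightarrow> (x, Ff f i x) \<in> Gamma_arcs n f"
  unfolding Gamma_arcs_def by blast

lemma Ff_iter_in_Bn_and_Gamma_rtrancl:
  assumes "s \<in> Strat n" "x \<in> Bn n"
  shows "Ff_iter f s t x \<in> Bn n \<and> (x, Ff_iter f s t x) \<in> (Gamma_arcs n f)\<^sup>*"
  using assms
proof (induction t arbitrary: s x)
  case 0
  then show ?case by simp
next
  case (Suc t)
  have i: "s 0 \<in> {1..n}" using Suc.prems(1) by (simp add: Strat_def)
  have "(\<lambda>u. s (Suc u)) \<in> Strat n" using Strat_shift[OF Suc.prems(1), of 1] by simp
  with Suc.IH Ff_in_Bn[OF Suc.prems(2) i]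
  have "Ff_iter f s (Suc t) x \<in> Bn n \<and> (Ff f (s 0) x, Ff_iter f s (Suc t) x) \<in> (Gamma_arcs n f)\<^sup>*"
    by simp
  then show ?case
    using Ff_in_Gamma_arcs[OF Suc.prems(2) i] by (meson converse_rtrancl_into_rtrancl)
qed

lemma Gamma_rtrancl_imp_Ff_iter:
  assumes "(x, y) \<in> (Gamma_arcs n f)\<^sup>*" "s \<in> Strat n"
  obtains p m where "p \<in> Strat n" "Ff_iter f p m x = y" "\<And>u. p (u + m) = s u"
proof -
  have "\<exists>p m. p \<in> Strat n \<and> Ff_iter f p m x = y \<and> (\<forall>u. p (u + m) = s u)"
    using assms(1)
  proof (induction rule: converse_rtrancl_induct)
    case base
    show ?case using assms(2) by (intro exI[of _ s] exI[of _ 0]) simp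
  next
    case (step x w)
    obtain i where i: "i \<in> {1..n}" "w = Ff f i x"
      using step.hyps(1) by (auto simp: Gamma_arcs_def)
    obtain p m where p: "p \<in> Strat n" "Ff_iter f p m w = y" "\<forall>u. p (u + m) = s u"
      using step.IH by blast
    define p' where "p' = (\<lambda>u. case u of 0 \<Rightarrow> i | Suc v \<Rightarrow> p v)"
    have "p' \<in> Strat n" using p(1) i(1) by (auto simp: Strat_def p'_def split: nat.splits)
    moreover have "Ff_iter f p' (Suc m) x = y" using p(2) i(2) by (simp add: p'_def)
    moreover have "\<forall>u. p' (u + Suc m) = s u" using p(3) by (simp add: p'_def)
    ultimately show ?case by blast
  qed
  then show ?thesis using that by blast
qed

definition strat_dist :: "nat \<Rightarrow> (nat \<Rightarrow> nat) \<Rightarrow> (nat \<Rightarrow> nat) \<Rightarrow> real" where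
  "strat_dist n s s' = 9 / real n * (\<Sum>t. \<bar>real (s t) - real (s' t)\<bar> / 10 ^ (t + 1))"

lemma dist_X_eq:
  "dist_X n (s, x) (s', x') = (\<Sum>i = 1..n. if x i = x' i then 0 else 1) + strat_dist n s s'"
  by (simp add: dist_X_def strat_dist_def)

lemma strat_term_le:
  assumes "s \<in> Strat n" "s' \<in> Strat n"
  shows "\<bar>real (s t) - real (s' t)\<bar> / 10 ^ (t + 1) \<le> real n * (1/10) ^ (t + 1)"
proof -
  have "s t \<in> {1..n}" "s' t \<in> {1..n}" using assms by (auto simp: Strat_def)
  then have "\<bar>real (s t) - real (s' t)\<bar> \<le> real n" by (auto simp: abs_if)
  then show ?thesis by (simp add: divide_simps power_one_over)
qed

lemma strat_terms_summable:
  assumes "s \<in> Strat n" "s' \<in> Strat n"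
  shows "summable (\<lambda>t. \<bar>real (s t) - real (s' t)\<bar> / 10 ^ (t + 1))"
proof (rule summable_comparison_test)
  show "\<exists>N. \<forall>t\<ge>N. norm (\<bar>real (s t) - real (s' t)\<bar> / 10 ^ (t + 1)) \<le> real n * (1/10) ^ (t + 1)"
    using strat_term_le[OF assms] by auto
  show "summable (\<lambda>t. real n * (1/10::real) ^ (t + 1))"
    by (intro summable_mult summable_ignore_initial_segment[where k = 1, simplified])
      (simp add: summable_geometric)
qed

lemma strat_dist_nonneg: "s \<in> Strat n \<Longrightarrow> s' \<in> Strat n \<Longrightarrow> 0 \<le> strat_dist n s s'"
  unfolding strat_dist_def by (intro mult_nonneg_nonneg suminf_nonneg strat_terms_summable) auto

lemma strat_dist_le_if_agree:
  assumes "s \<in> Strat n" "s' \<in> Strat n" "\<And>u. u < k \<Longrightarrow> s u = s' u"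
  shows "strat_dist n s s' \<le> (1/10) ^ k"
proof -
  define F where "F t = \<bar>real (s t) - real (s' t)\<bar> / 10 ^ (t + 1)" for t
  have F: "summable F" unfolding F_def by (rule strat_terms_summable[OF assms(1,2)])
  have "suminf F = (\<Sum>u. F (u + k))"
    using suminf_split_initial_segment[OF F, of k] assms(3) by (simp add: F_def)
  also have "\<dots> \<le> (\<Sum>u. real n * (1/10) ^ (k + 1) * (1/10) ^ u)"
  proof (rule suminf_le)
    show "F (u + k) \<le> real n * (1/10) ^ (k + 1) * (1/10) ^ u" for u
      using strat_term_le[OF assms(1,2), of "u + k"] by (simp add: F_def power_add mult_ac)
  qed (use F summable_ignore_initial_segment in \<open>auto intro: summable_mult summable_geometric\<close>)
  also have "\<dots> = real n * (1/10) ^ k / 9"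
    by (subst suminf_mult) (auto simp: suminf_geometric)
  finally have "9 / real n * suminf F \<le> 9 / real n * (real n * (1/10) ^ k / 9)"
    by (intro mult_left_mono) auto
  also have "\<dots> \<le> (1/10) ^ k" by (cases "n = 0") auto
  finally show ?thesis unfolding strat_dist_def F_def[symmetric] .
qed

lemma dist_X_less_1_imp_eq:
  assumes "s \<in> Strat n" "s' \<in> Strat n" "x \<in> Bn n" "x' \<in> Bn n" "dist_X n (s, x) (s', x') < 1"
  shows "x = x'"
proof (rule ccontr)
  assume "x \<noteq> x'"
  then obtain i where i: "i \<in> {1..n}" "x i \<noteq> x' i"
    using assms(3,4) by (auto simp: Bn_def fun_eq_iff)
  have "1 \<le> (\<Sum>i = 1..n. if x i = x' i then 0 else 1 :: real)"
    using member_le_sum[of i "{1..n}" "\<lambda>i. if x i = x' i then 0 else 1 :: real"] i by simp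
  with assms(5) strat_dist_nonneg[OF assms(1,2)] show False by (simp add: dist_X_eq)
qed

lemma strongly_connected_if_transitive:
  assumes "n \<ge> 1" "topologically_transitive n f"
  shows "strongly_connected_Gamma n f"
  unfolding strongly_connected_Gamma_def
proof (intro ballI)
  fix x y assume x: "x \<in> Bn n" and y: "y \<in> Bn n"
  have s0: "(\<lambda>_. 1) \<in> Strat n" using assms(1) by (simp add: Strat_def)
  then have "(\<lambda>_. 1, x) \<in> XX n" "(\<lambda>_. 1, y) \<in> XX n" using x y by (simp_all add: XX_def)
  then obtain X' t where "X' \<in> ball_X n (\<lambda>_. 1, x) 1" "(Gf f ^^ t) X' \<in> ball_X n (\<lambda>_. 1, y) 1"
    using assms(2)[unfolded topologically_transitive_def, rule_format, of "(\<lambda>_. 1, x)" "(\<lambda>_. 1, y)" 1 1]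
    by auto
  moreover obtain s x' where "X' = (s, x')" by fastforce
  ultimately have s: "s \<in> Strat n" and x': "x' \<in> Bn n" and dx: "dist_X n (\<lambda>_. 1, x) (s, x') < 1"
      and dy: "dist_X n (\<lambda>_. 1, y) (\<lambda>u. s (u + t), Ff_iter f s t x') < 1"
      and "Ff_iter f s t x' \<in> Bn n"
    by (auto simp: ball_X_def XX_def Gf_funpow)
  then have "x = x'" and "y = Ff_iter f s t x'"
    using dist_X_less_1_imp_eq[OF s0 s x x' dx] dist_X_less_1_imp_eq[OF s0 Strat_shift[OF s] y _ dy]
    by blast+
  then show "(x, y) \<in> (Gamma_arcs n f)\<^sup>*"
    using Ff_iter_in_Bn_and_Gamma_rtrancl[OF s x'] by simp
qed

lemma transitive_if_strongly_connected:
  assumes "strongly_connected_Gamma n f"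
  shows "topologically_transitive n f"
  unfolding topologically_transitive_def
proof (intro ballI allI impI)
  fix X Y :: "(nat \<Rightarrow> nat) \<times> (nat \<Rightarrow> bool)" and rX rY :: real
  assume X: "X \<in> XX n" and Y: "Y \<in> XX n" and "rX > 0" "rY > 0"
  obtain s x sy y where XY: "X = (s, x)" "Y = (sy, y)" by (cases X, cases Y)
  have s: "s \<in> Strat n" and x: "x \<in> Bn n" and sy: "sy \<in> Strat n" and y: "y \<in> Bn n"
    using X Y XY by (auto simp: XX_def)
  obtain k where k: "(1/10::real) ^ k < rX"
    using real_arch_pow_inv[OF \<open>rX > 0\<close>, of "1/10"] by auto
  have "Ff_iter f s k x \<in> Bn n" using Ff_iter_in_Bn_and_Gamma_rtrancl[OF s x] by blast
  then have "(Ff_iter f s k x, y) \<in> (Gamma_arcs n f)\<^sup>*"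
    using assms y by (simp add: strongly_connected_Gamma_def)
  then obtain p m where p: "p \<in> Strat n" "Ff_iter f p m (Ff_iter f s k x) = y" "\<And>u. p (u + m) = sy u"
    using Gamma_rtrancl_imp_Ff_iter sy by metis
  define q where "q u = (if u < k then s u else p (u - k))" for u
  have q: "q \<in> Strat n" using s p(1) by (auto simp: Strat_def q_def)
  have "(\<lambda>u. q (u + k)) = p" by (simp add: q_def)
  then have "Ff_iter f q (k + m) x = y"
    using Ff_iter_add[of f q k m x] Ff_iter_cong[of k q s f x] p(2) by (simp add: q_def)
  moreover have "(\<lambda>u. q (u + (k + m))) = sy"
    using p(3) by (simp add: q_def fun_eq_iff add.assoc[symmetric])
  ultimately have "(Gf f ^^ (k + m)) (q, x) = Y" by (simp add: Gf_funpow XY)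
  moreover have "(q, x) \<in> ball_X n X rX"
    using strat_dist_le_if_agree[OF s q, of k] k q x by (simp add: XY ball_X_def XX_def dist_X_eq q_def)
  moreover have "Y \<in> ball_X n Y rY" using Y XY \<open>rY > 0\<close> by (simp add: ball_X_def dist_X_def)
  ultimately show "\<exists>X' \<in> ball_X n X rX. \<exists>t. (Gf f ^^ t) X' \<in> ball_X n Y rY"
    by blast
qed

theorem proposition1:
  fixes n :: nat and f :: "(nat \<Rightarrow> bool) \<Rightarrow> (nat \<Rightarrow> bool)"
  assumes "n \<ge> 1"
  assumes "\<forall>x \<in> Bn n. f x \<in> Bn n"
  shows "topologically_transitive n f \<longleftrightarrow> strongly_connected_Gamma n f"
  using strongly_connected_if_transitive[OF assms(1)] transitive_if_strongly_connected by blast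

end
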